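(* Let $X$ be a real vector space of dimension $\geq 3$ and let $P,R:X\to X$ be (not necessarily linear) mappings such that $P^2=P$, $R^2=R$ and $P+R=I$ (the identity). Write $\mathcal P=PX$ and $\mathcal R=RX$. Then: (i) $PR=RP=0$; (ii) $\mathcal P\cap\mathcal R=\{0\}$ and $\mathcal P+\mathcal R=X$; (iii) $P0=R0=0$; (iv) $Px-Rx=0$ if and only if $x=0$.
   Context: Such a pair $P,R$ is called a pair of mutually polar retractions; $0$ denotes the zero mapping. *)

theory Defs
  imports "HOL-Analysis.Analysis"
begin

definition dim_at_least :: "nat \<Rightarrow> 'a::real_vector itself \<Rightarrow> bool" where
  "dim_at_least n _ \<longleftrightarrow> (\<exists>B::'a set. finite B \<and> card B = n \<and> independent B)"

end

theory Submission
  imports Defs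
begin

text \<open>Decomposing a point \<open>R x\<close> of the range of \<open>R\<close> as \<open>P (R x) + R (R x) = P (R x) + R x\<close>
  forces \<open>P (R x) = 0\<close>, and symmetrically \<open>R (P x) = 0\<close>. Hence \<open>P\<close> vanishes on the range of
  \<open>R\<close> and fixes its own range, so the two ranges meet only in \<open>0\<close>; all other claims follow.\<close>

locale mutually_polar_retractions =
  fixes P R :: "'a::group_add \<Rightarrow> 'a"
  assumes P_idem: "P (P x) = P x"
    and R_idem: "R (R x) = R x"
    and P_plus_R: "P x + R x = x"
begin

lemma P_R_eq_0: "P (R x) = 0"
  using P_plus_R [of "R x"] by (metis R_idem add_0_left add_right_cancel)

lemma R_P_eq_0: "R (P x) = 0"
  using P_plus_R [of "P x"] by (metis P_idem add_0_right add_left_cancel)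

lemma P_0: "P 0 = 0"
  using P_R_eq_0 [of "P 0"] by (simp add: R_P_eq_0)

lemma R_0: "R 0 = 0"
  using R_P_eq_0 [of "R 0"] by (simp add: P_R_eq_0)

lemma range_P_Int_range_R: "range P \<inter> range R = {0}"
proof (intro equalityI subsetI)
  fix y assume "y \<in> range P \<inter> range R"
  then obtain a b where "y = P a" and "y = R b" by blast
  then have "P y = y" and "P y = 0" by (metis P_idem, metis P_R_eq_0)
  then show "y \<in> {0}" by simp
next
  show "y \<in> range P \<inter> range R" if "y \<in> {0}" for y
    using that P_0 R_0 by (metis IntI rangeI singletonD)
qed

lemma range_P_plus_range_R: "{p + r | p r. p \<in> range P \<and> r \<in> range R} = UNIV"
  using P_plus_R by (metis (mono_tags, lifting) UNIV_eq_I mem_Collect_eq rangeI)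

lemma P_minus_R_eq_0_iff: "P x - R x = 0 \<longleftrightarrow> x = 0"
proof
  assume "P x - R x = 0"
  then have "P x = R x" by simp
  then have "P x = 0" using range_P_Int_range_R by (metis IntI rangeI singletonD)
  with \<open>P x = R x\<close> show "x = 0" using P_plus_R [of x] by simp
qed (simp add: P_0 R_0)

end

theorem proposition1:
  fixes P R :: "'a::real_vector \<Rightarrow> 'a"
  assumes dim3: "dim_at_least 3 TYPE('a)"
    and idemP: "P \<circ> P = P"
    and idemR: "R \<circ> R = R"
    and sumI: "\<And>x. P x + R x = x"
  shows "(P \<circ> R = (\<lambda>_. 0) \<and> R \<circ> P = (\<lambda>_. 0))
       \<and> (range P \<inter> range R = {0} \<and> {p + r | p r. p \<in> range P \<and> r \<in> range R} = UNIV)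
       \<and> (P 0 = 0 \<and> R 0 = 0)
       \<and> (\<forall>x. P x - R x = 0 \<longleftrightarrow> x = 0)"
proof -
  interpret mutually_polar_retractions P R
    using idemP idemR sumI by unfold_locales (simp_all add: fun_eq_iff)
  show ?thesis
    using P_minus_R_eq_0_iff
    by (simp add: fun_eq_iff P_R_eq_0 R_P_eq_0 P_0 R_0 range_P_Int_range_R range_P_plus_range_R)
qed

end
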